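(* Let $\Omega,\Omega^*\subset\widehat{\mathbb C}$ be domains each containing $\infty$, and let $f\colon\Omega\to\Omega^*$ be a homeomorphism with $f(\infty)=\infty$. Suppose that each boundary component of $\Omega$ and of $\Omega^*$ is a Jordan curve or a single point, and that for each $\varepsilon>0$ there are at most finitely many Jordan curves in $\partial\Omega$ and in $\partial\Omega^*$ with diameter greater than $\varepsilon$. Let $B$ be a component of $\widehat{\mathbb C}\setminus\Omega$, let $z_0\in\partial B$ and $w_0\in\mathrm{Clu}(f;z_0)$. Then for each $\eta>0$ there exists $\delta>0$ such that for every closed curve $\gamma\subset B(z_0,\delta)\setminus\{z_0\}$ with winding number $1$ around $z_0$ there is a point $z\in\gamma\cap\Omega$ with $|f(z)-w_0|<\eta$. In particular, for each $\eta>0$ there exists $\delta>0$ such that for every such closed curve $\gamma\subset B(z_0,\delta)\setminus\{z_0\}$ there are points $z_1,z_2\in\gamma\cap\Omega$ with $|f(z_1)-f(z_2)|\ge\mathrm{diam}(\mathrm{Clu}(f;z_0))-\eta$.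
   Context: The cluster set of $f$ at $z_0\in\partial\Omega$ is $\mathrm{Clu}(f;z_0)=\bigcap_{\varepsilon>0}\overline{f(B(z_0,\varepsilon)\cap\Omega)}$. *)

theory Defs
  imports "HOL-Complex_Analysis.Complex_Analysis"
begin

text \<open>Cluster set of f at z0 relative to Omega (closure taken in the complex plane;
  under the hypotheses of the lemma the cluster set never contains infinity).\<close>
definition clu :: "(complex \<Rightarrow> complex) \<Rightarrow> complex set \<Rightarrow> complex \<Rightarrow> complex set" where
  "clu f \<Omega> z0 = (\<Inter>\<epsilon>\<in>{0<..}. closure (f ` (ball z0 \<epsilon> \<inter> \<Omega>)))"

definition jordan_curve :: "complex set \<Rightarrow> bool" where
  "jordan_curve C \<longleftrightarrow> (\<exists>g. simple_path g \<and> pathfinish g = pathstart g \<and> path_image g = C)"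

text \<open>The finite part of a domain of the Riemann sphere containing infinity.\<close>
definition domain_with_infinity :: "complex set \<Rightarrow> bool" where
  "domain_with_infinity \<Omega> \<longleftrightarrow> open \<Omega> \<and> connected \<Omega> \<and> (\<exists>R. \<forall>z. R < norm z \<longrightarrow> z \<in> \<Omega>)"

end

theory Submission
  imports Defs "HOL-Analysis.Jordan_Curve"
begin

(* A cluster value w of f at z0 lies on the boundary of \<Omega>', and \<Omega>' is locally connected at w:
   the boundary components of \<Omega>' are Jordan curves or points and only finitely many are large,
   so near w the boundary of \<Omega>' together with a small circle around w separates no two points
   of \<Omega>' (Janiszewski's theorem, applied to the Jordan curve through w cut into a small arc at w
   and the rest). Now pick zq in \<Omega> with f zq close to w and put \<delta> = |zq - z0|. If a loop \<gamma> in the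
   punctured \<delta>-disc winding once around z0 met no point of \<Omega> mapped near w, then g = f\<inverse> would
   carry a connected subset of \<Omega>' near w joining f zq to f z1, for some z1 in \<Omega> very close to z0,
   onto a connected set missing \<gamma> and joining z1 to zq; but the winding number of \<gamma> is 1 at z1
   and 0 at zq. The second claim follows by applying the first to two points that realise the
   diameter of the compact cluster set. *)

section \<open>Cluster sets\<close>

lemma clu_approachable:
  "w \<in> clu f \<Omega> z0 \<longleftrightarrow> (\<forall>r>0. \<forall>e>0. \<exists>z\<in>ball z0 r \<inter> \<Omega>. dist (f z) w < e)"
  unfolding clu_def INT_iff Ball_def greaterThan_iff closure_approachable by simp

lemma clu_subset_frontier:
  assumes hom: "homeomorphism \<Omega> \<Omega>' f g" and "open \<Omega>'" and z0: "z0 \<notin> \<Omega>"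
  shows "clu f \<Omega> z0 \<subseteq> frontier \<Omega>'"
proof
  fix w assume w: "w \<in> clu f \<Omega> z0"
  have fO: "f ` \<Omega> = \<Omega>'" and gO: "g ` \<Omega>' = \<Omega>" and gf: "\<And>x. x \<in> \<Omega> \<Longrightarrow> g (f x) = x"
    and cg: "continuous_on \<Omega>' g"
    using hom by (auto simp: homeomorphism_def)
  have "\<exists>y\<in>\<Omega>'. dist y w < e" if "e > 0" for e
  proof -
    have "\<exists>z\<in>ball z0 1 \<inter> \<Omega>. dist (f z) w < e"
      using w that by (simp add: clu_approachable)
    then show ?thesis using fO by auto
  qed
  then have "w \<in> closure \<Omega>'"
    by (simp add: closure_approachable)
  moreover have "w \<notin> \<Omega>'"
  proof
    assume wO: "w \<in> \<Omega>'"
    define d where "d = dist (g w) z0"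
    have "d > 0" using wO gO z0 by (auto simp: d_def)
    then obtain e where "e > 0" and e: "\<And>y. y \<in> \<Omega>' \<Longrightarrow> dist y w < e \<Longrightarrow> dist (g y) (g w) < d/2"
      using cg wO unfolding continuous_on_iff by (metis half_gt_zero)
    then obtain z where z: "z \<in> ball z0 (d/2) \<inter> \<Omega>" "dist (f z) w < e"
      using w \<open>d > 0\<close> unfolding clu_approachable by (meson half_gt_zero)
    then have "dist z (g w) < d/2"
      using e[of "f z"] fO gf by auto
    with z have "dist (g w) z0 < d"
      using dist_triangle_half_r[of z z0 d "g w"] by (simp add: dist_commute)
    then show False by (simp add: d_def)
  qed
  ultimately show "w \<in> frontier \<Omega>'"
    using \<open>open \<Omega>'\<close> by (simp add: frontier_def interior_open)
qed

lemma homeomorphism_bounded_image: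
  fixes f :: "'a::real_normed_vector \<Rightarrow> 'b::real_normed_vector" and g :: "'b \<Rightarrow> 'a"
  assumes hom: "homeomorphism \<Omega> \<Omega>' f g" and g_inf: "filterlim g at_infinity at_infinity"
    and "bounded S" "S \<subseteq> \<Omega>"
  shows "bounded (f ` S)"
proof -
  obtain R where R: "\<And>x. x \<in> S \<Longrightarrow> norm x \<le> R"
    using \<open>bounded S\<close> bounded_iff by blast
  have "filterlim (\<lambda>y. norm (g y)) at_top at_infinity"
    using g_inf by (rule filterlim_at_infinity_imp_norm_at_top)
  then have "eventually (\<lambda>y. R + 1 \<le> norm (g y)) at_infinity"
    unfolding filterlim_at_top by blast
  then obtain M where M: "\<And>y. M \<le> norm y \<Longrightarrow> R + 1 \<le> norm (g y)"
    unfolding eventually_at_infinity by blast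
  have "norm (f x) \<le> M" if "x \<in> S" for x
  proof (rule ccontr)
    assume "\<not> norm (f x) \<le> M"
    then have "R + 1 \<le> norm (g (f x))" using M by simp
    moreover have "g (f x) = x" using hom \<open>S \<subseteq> \<Omega>\<close> that by (auto simp: homeomorphism_def)
    ultimately show False using R[OF that] by simp
  qed
  then have "f ` S \<subseteq> cball 0 M"
    by auto
  then show ?thesis
    using bounded_cball bounded_subset by blast
qed

lemma compact_clu:
  assumes "r > 0" "bounded (f ` (ball z0 r \<inter> \<Omega>))"
  shows "compact (clu f \<Omega> z0)"
proof -
  have "clu f \<Omega> z0 \<subseteq> closure (f ` (ball z0 r \<inter> \<Omega>))"
    using \<open>r > 0\<close> unfolding clu_def by auto
  then have "bounded (clu f \<Omega> z0)"
    using assms(2) bounded_closure bounded_subset by blast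
  moreover have "closed (clu f \<Omega> z0)"
    unfolding clu_def by auto
  ultimately show ?thesis
    by (simp add: compact_eq_bounded_closed)
qed

section \<open>Loops around a point\<close>

lemma connected_disjoint_path_image_subset_ball:
  assumes "path \<gamma>" "pathfinish \<gamma> = pathstart \<gamma>" "path_image \<gamma> \<subseteq> ball z0 \<delta>"
    and "winding_number \<gamma> z0 \<noteq> 0"
    and "connected S" "S \<inter> path_image \<gamma> = {}" "z0 \<in> S"
  shows "S \<subseteq> ball z0 \<delta>"
proof
  fix x assume "x \<in> S"
  then have "winding_number \<gamma> x = winding_number \<gamma> z0"
    using winding_number_constant[OF assms(1,2,5,6)] assms(7) unfolding constant_on_def by metis
  show "x \<in> ball z0 \<delta>"
  proof (rule ccontr)
    assume "x \<notin> ball z0 \<delta>"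
    then have "winding_number \<gamma> x = 0"
      by (rule winding_number_zero_outside[OF assms(1) convex_ball assms(2) _ assms(3)])
    then show False
      using \<open>winding_number \<gamma> x = winding_number \<gamma> z0\<close> assms(4) by simp
  qed
qed

definition loop_around :: "complex \<Rightarrow> real \<Rightarrow> (real \<Rightarrow> complex) \<Rightarrow> bool" where
  "loop_around z0 \<delta> \<gamma> \<longleftrightarrow> path \<gamma> \<and> pathfinish \<gamma> = pathstart \<gamma>
     \<and> path_image \<gamma> \<subseteq> ball z0 \<delta> - {z0} \<and> winding_number \<gamma> z0 = 1"

lemma loop_around_mono: "loop_around z0 \<delta> \<gamma> \<Longrightarrow> \<delta> \<le> \<delta>' \<Longrightarrow> loop_around z0 \<delta>' \<gamma>"
  unfolding loop_around_def by (meson Diff_mono order_refl subset_ball subset_trans)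

lemma loop_around_encloses:
  assumes "loop_around z0 \<delta> \<gamma>"
  obtains \<rho> where "\<rho> > 0"
    "\<And>S. connected S \<Longrightarrow> S \<inter> path_image \<gamma> = {} \<Longrightarrow> S \<inter> ball z0 \<rho> \<noteq> {} \<Longrightarrow> S \<subseteq> ball z0 \<delta>"
proof -
  have \<gamma>: "path \<gamma>" "pathfinish \<gamma> = pathstart \<gamma>" "path_image \<gamma> \<subseteq> ball z0 \<delta>"
    "z0 \<notin> path_image \<gamma>" "winding_number \<gamma> z0 = 1"
    using assms unfolding loop_around_def by auto
  obtain \<rho> where "\<rho> > 0" "ball z0 \<rho> \<subseteq> - path_image \<gamma>"
    using \<gamma>(1,4) by (meson ComplI closed_path_image open_Compl open_contains_ball)
  show thesis
  proof (rule that[OF \<open>\<rho> > 0\<close>])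
    fix S assume S: "connected S" "S \<inter> path_image \<gamma> = {}" "S \<inter> ball z0 \<rho> \<noteq> {}"
    have "connected (S \<union> ball z0 \<rho>)"
      using S(1,3) by (intro connected_Un) auto
    moreover have "(S \<union> ball z0 \<rho>) \<inter> path_image \<gamma> = {}"
      using S(2) \<open>ball z0 \<rho> \<subseteq> - path_image \<gamma>\<close> by blast
    moreover have "z0 \<in> S \<union> ball z0 \<rho>"
      using \<open>\<rho> > 0\<close> by simp
    ultimately have "S \<union> ball z0 \<rho> \<subseteq> ball z0 \<delta>"
      by (intro connected_disjoint_path_image_subset_ball[OF \<gamma>(1-3)]) (simp_all add: \<gamma>(5))
    then show "S \<subseteq> ball z0 \<delta>"
      by blast
  qed
qed

section \<open>Local connectivity at the boundary\<close>

lemma connected_component_Int_of_avoiding_frontiers: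
  assumes "connected_component (- (frontier S \<union> frontier U)) a b" "a \<in> S" "a \<in> U"
  shows "connected_component (S \<inter> U) a b"
proof -
  obtain T where T: "connected T" "T \<subseteq> - (frontier S \<union> frontier U)" "a \<in> T" "b \<in> T"
    using assms(1) unfolding connected_component_def by blast
  have "T \<subseteq> S" "T \<subseteq> U"
    using connected_Int_frontier[OF T(1), of S] connected_Int_frontier[OF T(1), of U] T(2,3) assms(2,3)
    by blast+
  then show ?thesis
    unfolding connected_component_def using T by blast
qed

lemma component_of_Un_sphere_not_subset_ball:
  fixes G :: "'a::euclidean_space set"
  assumes G: "compact G" and K: "K \<in> components G" and x: "x \<in> sphere w r"
    and KC: "K \<subseteq> connected_component_set (G \<union> sphere w r) x"
  shows "\<not> K \<subseteq> ball w r"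
proof
  \<comment> \<open>Sura-Bura: K has a neighbourhood V inside the ball that is clopen in G; V would split C.\<close>
  assume "K \<subseteq> ball w r"
  moreover have "locally compact G" "compact K"
    using G K by (simp_all add: closed_imp_locally_compact compact_imp_closed compact_components)
  ultimately obtain V where V: "openin (top_of_set G) V" "K \<subseteq> V" "V \<subseteq> ball w r" "compact V"
    using Sura_Bura_clopen_subset[OF _ K _ open_ball] by metis
  define C where "C = connected_component_set (G \<union> sphere w r) x"
  define W where "W = (G - V) \<union> sphere w r"
  have "closedin (top_of_set G) (G - V)"
    using V(1) by (simp add: openin_closedin_eq)
  then have "closed (G - V)"
    using G closedin_closed_trans compact_imp_closed by blast
  then have "closed W"
    unfolding W_def by (intro closed_Un closed_sphere)
  have "ball w r \<inter> sphere w r = {}"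
    by auto
  then have "V \<inter> W \<inter> C = {}"
    using V(3) unfolding W_def by blast
  moreover have "C \<subseteq> V \<union> W"
    using connected_component_subset[of "G \<union> sphere w r" x] unfolding C_def W_def by blast
  moreover have "connected C"
    unfolding C_def by simp
  ultimately have "V \<inter> C = {} \<or> W \<inter> C = {}"
    using connected_closedD[OF _ _ _ compact_imp_closed[OF V(4)] \<open>closed W\<close>] by blast
  moreover have "K \<subseteq> V \<inter> C"
    using KC V(2) unfolding C_def by blast
  moreover have "x \<in> W \<inter> C"
    using x unfolding C_def W_def by simp
  ultimately show False
    using in_components_nonempty[OF K] by blast
qed

lemma jordan_curve_split_near_point:
  assumes "jordan_curve J" "w \<in> J" "\<rho> > 0"
  obtains A K where "compact A" "A \<subseteq> ball w \<rho>" "compact K" "connected K" "J = A \<union> K" "w \<notin> K"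
proof -
  obtain c where c: "simple_path c" "pathfinish c = pathstart c" "path_image c = J"
    using assms(1) unfolding jordan_curve_def by blast
  then obtain t0 where t0: "t0 \<in> {0..1}" "c t0 = w"
    using assms(2) unfolding path_image_def by auto
  define d where "d = shiftpath t0 c"
  have "simple_path d" "path_image d = J"
    using c t0 by (simp_all add: d_def simple_path_shiftpath path_image_shiftpath)
  have d01: "d 0 = w" "d 1 = w"
    using t0 c(2) by (auto simp: d_def shiftpath_def pathstart_def pathfinish_def)
  have cont: "continuous_on {0..1} d"
    using \<open>simple_path d\<close> simple_path_imp_path path_def by blast
  then obtain \<sigma> where "\<sigma> > 0"
    and \<sigma>: "\<And>s t. s \<in> {0..1} \<Longrightarrow> t \<in> {0..1} \<Longrightarrow> dist s t < \<sigma> \<Longrightarrow> dist (d s) (d t) < \<rho>"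
    using compact_uniformly_continuous[OF cont] \<open>\<rho> > 0\<close> unfolding uniformly_continuous_on_def
    by (metis compact_Icc)
  define \<tau> where "\<tau> = min (\<sigma>/2) (1/4)"
  have \<tau>: "0 < \<tau>" "\<tau> < \<sigma>" "\<tau> \<le> 1/4"
    using \<open>\<sigma> > 0\<close> by (auto simp: \<tau>_def)
  define A where "A = d ` ({0..\<tau>} \<union> {1-\<tau>..1})"
  define K where "K = d ` {\<tau>..1-\<tau>}"
  show thesis
  proof (rule that)
    show "compact A" "compact K" "connected K"
      unfolding A_def K_def using cont \<tau>
      by (auto intro!: compact_continuous_image connected_continuous_image intro: continuous_on_subset)
    show "A \<subseteq> ball w \<rho>"
    proof
      fix x assume "x \<in> A"
      then obtain t where t: "t \<in> {0..\<tau>} \<union> {1-\<tau>..1}" "x = d t"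
        unfolding A_def by blast
      then show "x \<in> ball w \<rho>"
        using \<sigma>[of 0 t] \<sigma>[of 1 t] \<tau> d01 by (cases "t \<le> \<tau>") (auto simp: dist_real_def)
    qed
    have "{0..1} = ({0..\<tau>} \<union> {1-\<tau>..1}) \<union> {\<tau>..1-\<tau>::real}"
      using \<tau> by auto
    then show "J = A \<union> K"
      using \<open>path_image d = J\<close> unfolding path_image_def A_def K_def by (metis image_Un)
    show "w \<notin> K"
    proof
      assume "w \<in> K"
      then obtain t where t: "t \<in> {\<tau>..1-\<tau>}" "d t = d 0"
        using d01 unfolding K_def by auto
      then have "t = 0 \<or> t = 1"
        using \<open>simple_path d\<close> \<tau> unfolding simple_path_def loop_free_def by fastforce
      then show False
        using t \<tau> by auto
    qed
  qed
qed

lemma component_near_centre_large: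
  fixes G :: "'a::euclidean_space set"
  assumes G: "compact G" and x: "x \<in> sphere w r"
    and p: "p \<in> connected_component_set (G \<union> sphere w r) x" "dist w p < r/2"
  shows "p \<in> G" "diameter (connected_component_set G p) > r/2"
proof -
  have "p \<notin> sphere w r"
    using p(2) zero_le_dist[of w p] by auto
  then show "p \<in> G"
    using p(1) connected_component_subset[of "G \<union> sphere w r" x] by blast
  define K where "K = connected_component_set G p"
  have K: "K \<in> components G" "p \<in> K"
    using \<open>p \<in> G\<close> by (simp_all add: K_def componentsI)
  have "connected_component_set (G \<union> sphere w r) p = connected_component_set (G \<union> sphere w r) x"
    using p(1) by (rule connected_component_eq)
  then have "K \<subseteq> connected_component_set (G \<union> sphere w r) x"
    unfolding K_def by (metis Un_upper1 connected_component_mono)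
  then obtain z where z: "z \<in> K" "z \<notin> ball w r"
    using component_of_Un_sphere_not_subset_ball[OF G K(1) x] by blast
  have "bounded K"
    using G K(1) compact_components compact_imp_bounded by blast
  then have "dist p z \<le> diameter K"
    using diameter_bounded_bound K(2) z(1) by blast
  moreover have "dist w z \<le> dist w p + dist p z"
    by (rule dist_triangle)
  ultimately show "diameter K > r/2"
    using z(2) p(2) by simp
qed

lemma component_of_Un_sphere_near_centre:
  fixes G :: "complex set"
  assumes G: "compact G"
    and jordan_or_point: "\<forall>K\<in>components G. jordan_curve K \<or> (\<exists>a. K = {a})"
    and finite_large: "\<forall>\<epsilon>>0. finite {K\<in>components G. jordan_curve K \<and> diameter K > \<epsilon>}"
    and "\<eta> > 0"
  obtains \<rho> where "\<rho> > 0"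
    "\<And>x. x \<in> sphere w \<eta> \<Longrightarrow>
       connected_component_set (G \<union> sphere w \<eta>) x \<inter> ball w \<rho> \<subseteq> connected_component_set G w"
proof -
  \<comment> \<open>Components of G reached from the sphere close to w are large, so there are only
    finitely many of them; \<rho> keeps away from those that miss w.\<close>
  define \<K> where "\<K> = {K\<in>components G. jordan_curve K \<and> diameter K > \<eta>/2}"
  define Far where "Far = \<Union>{K\<in>\<K>. w \<notin> K}"
  have "finite \<K>"
    unfolding \<K>_def by (rule finite_large[rule_format]) (use \<open>\<eta> > 0\<close> in simp)
  then have "finite {K\<in>\<K>. w \<notin> K}"
    by (rule finite_subset[rotated]) auto
  moreover have "closed K" if "K \<in> components G" for K
    using closed_components[OF compact_imp_closed[OF G] that] .
  ultimately have "closed Far"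
    unfolding Far_def \<K>_def by (intro closed_Union) auto
  moreover have "w \<notin> Far"
    unfolding Far_def by blast
  ultimately obtain \<rho> where "\<rho> > 0" "ball w \<rho> \<subseteq> - Far"
    by (meson ComplI open_Compl open_contains_ball)
  show thesis
  proof (rule that[of "min \<rho> (\<eta>/2)"])
    show "min \<rho> (\<eta>/2) > 0"
      using \<open>\<rho> > 0\<close> \<open>\<eta> > 0\<close> by simp
    fix x assume x: "x \<in> sphere w \<eta>"
    show "connected_component_set (G \<union> sphere w \<eta>) x \<inter> ball w (min \<rho> (\<eta>/2)) \<subseteq> connected_component_set G w"
    proof
      fix p assume p: "p \<in> connected_component_set (G \<union> sphere w \<eta>) x \<inter> ball w (min \<rho> (\<eta>/2))"
      define K where "K = connected_component_set G p"
      have "p \<in> G" "diameter K > \<eta>/2"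
        using component_near_centre_large[OF G x, of p] p unfolding K_def by auto
      then have "K \<in> \<K>"
        using jordan_or_point componentsI[OF \<open>p \<in> G\<close>] \<open>\<eta> > 0\<close> unfolding \<K>_def K_def by fastforce
      moreover have "p \<notin> Far"
        using p \<open>ball w \<rho> \<subseteq> - Far\<close> by auto
      ultimately have "w \<in> K"
        using \<open>p \<in> G\<close> unfolding Far_def K_def by auto
      then show "p \<in> connected_component_set G w"
        unfolding K_def by (simp add: connected_component_sym)
    qed
  qed
qed

lemma Janiszewski_near_split_curve:
  fixes C A K :: "complex set"
  assumes "closed C" "compact A" "A \<subseteq> ball w \<rho>" "compact K" "connected K"
    and near: "C \<inter> ball w \<rho> \<subseteq> A \<union> K"
    and ab: "connected_component (- (A \<union> K)) a b" "a \<in> ball w m" "b \<in> ball w m"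
    and "ball w m \<subseteq> ball w \<rho> - K"
  shows "connected_component (- C) a b"
proof -
  define T where "T = (C - ball w \<rho>) \<union> K"
  have "connected_component (- ((A \<union> K) \<union> T)) a b"
  proof (rule Janiszewski)
    show "compact (A \<union> K)"
      using assms(2,4) by (rule compact_Un)
    show "closed T"
      unfolding T_def using assms(1,4) by (intro closed_Un closed_Diff open_ball) (auto intro: compact_imp_closed)
    have "(A \<union> K) \<inter> T = K"
      using assms(3) unfolding T_def by blast
    then show "connected ((A \<union> K) \<inter> T)"
      using assms(5) by simp
    show "connected_component (- (A \<union> K)) a b"
      by (rule ab(1))
    have "ball w m \<subseteq> - T"
      using \<open>ball w m \<subseteq> ball w \<rho> - K\<close> unfolding T_def by blast
    then show "connected_component (- T) a b"
      unfolding connected_component_def using ab(2,3) by (meson connected_ball)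
  qed
  moreover have "C \<subseteq> (A \<union> K) \<union> T"
    using near unfolding T_def by blast
  ultimately show ?thesis
    using connected_component_of_subset by (metis Compl_anti_mono)
qed

lemma separating_component_of_Un:
  fixes G S :: "'a::euclidean_space set"
  assumes "closed G" "closed S" "connected_component (- G) a b"
    and "\<not> connected_component (- (G \<union> S)) a b"
  obtains C where "C \<in> components (G \<union> S)" "C \<inter> S \<noteq> {}" "\<not> connected_component (- C) a b"
proof -
  obtain C where C: "C \<in> components (G \<union> S)" "\<not> connected_component (- C) a b"
    using separation_by_component_closed_pointwise[OF closed_Un[OF assms(1,2)] assms(4)] by blast
  have "C \<inter> S \<noteq> {}"
  proof
    assume "C \<inter> S = {}"
    then have "- G \<subseteq> - C"
      using in_components_subset[OF C(1)] by blast
    then show False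
      using C(2) assms(3) connected_component_of_subset by blast
  qed
  then show thesis
    using that C by blast
qed

lemma component_split_near_point:
  fixes G :: "complex set"
  assumes "\<forall>K\<in>components G. jordan_curve K \<or> (\<exists>a. K = {a})"
    and "J \<in> components G" "w \<in> J" "\<rho> > 0"
  obtains A K where "compact A" "A \<subseteq> ball w \<rho>" "compact K" "connected K" "J = A \<union> K" "w \<notin> K"
proof (cases "jordan_curve J")
  case True
  then show ?thesis
    using jordan_curve_split_near_point[OF True \<open>w \<in> J\<close> \<open>\<rho> > 0\<close>] that by blast
next
  case False
  then have "J = {w}"
    using assms(1-3) by auto
  then show ?thesis
    using that[of "{w}" "{}"] \<open>\<rho> > 0\<close> by simp
qed

lemma sphere_Un_not_separating_near_centre:
  fixes G :: "complex set"
  assumes G: "compact G"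
    and jordan_or_point: "\<forall>K\<in>components G. jordan_curve K \<or> (\<exists>a. K = {a})"
    and finite_large: "\<forall>\<epsilon>>0. finite {K\<in>components G. jordan_curve K \<and> diameter K > \<epsilon>}"
    and w: "w \<in> G" and "\<eta> > 0"
  obtains m where "m > 0" "m < \<eta>"
    "\<And>a b. a \<in> ball w m \<Longrightarrow> b \<in> ball w m \<Longrightarrow> connected_component (- G) a b \<Longrightarrow>
       connected_component (- (G \<union> sphere w \<eta>)) a b"
proof -
  define J where "J = connected_component_set G w"
  obtain \<rho> where "\<rho> > 0" and near:
    "\<And>x. x \<in> sphere w \<eta> \<Longrightarrow> connected_component_set (G \<union> sphere w \<eta>) x \<inter> ball w \<rho> \<subseteq> J"
    using component_of_Un_sphere_near_centre[OF G jordan_or_point finite_large \<open>\<eta> > 0\<close>]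
    unfolding J_def by blast
  have J: "J \<in> components G" "w \<in> J" "J \<subseteq> G"
    using w by (simp_all add: J_def componentsI connected_component_subset)
  obtain A K where AK: "compact A" "A \<subseteq> ball w \<rho>" "compact K" "connected K" "J = A \<union> K" "w \<notin> K"
    using component_split_near_point[OF jordan_or_point J(1,2) \<open>\<rho> > 0\<close>] by blast
  obtain r where "r > 0" "ball w r \<subseteq> - K"
    using AK(3,6) by (meson ComplI compact_imp_closed open_Compl open_contains_ball)
  define m where "m = min r (min \<rho> (\<eta>/2))"
  have "m > 0" "m < \<eta>"
    using \<open>r > 0\<close> \<open>\<rho> > 0\<close> \<open>\<eta> > 0\<close> by (auto simp: m_def)
  have ball_m: "ball w m \<subseteq> ball w \<rho> - K"
    using \<open>ball w r \<subseteq> - K\<close> by (auto simp: m_def)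
  show thesis
  proof (rule that[OF \<open>m > 0\<close> \<open>m < \<eta>\<close>])
    fix a b
    assume ab: "a \<in> ball w m" "b \<in> ball w m" "connected_component (- G) a b"
    show "connected_component (- (G \<union> sphere w \<eta>)) a b"
    proof (rule ccontr)
      assume "\<not> connected_component (- (G \<union> sphere w \<eta>)) a b"
      then obtain C where C: "C \<in> components (G \<union> sphere w \<eta>)" "C \<inter> sphere w \<eta> \<noteq> {}"
        "\<not> connected_component (- C) a b"
        using separating_component_of_Un[OF compact_imp_closed[OF G] closed_sphere ab(3)] by blast
      then obtain x where x: "x \<in> C" "x \<in> sphere w \<eta>"
        by blast
      have "closed C"
        using C(1) G by (meson closed_Un closed_components closed_sphere compact_imp_closed)
      moreover have "C = connected_component_set (G \<union> sphere w \<eta>) x"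
        using C(1) x(1) by (metis components_iff connected_component_eq)
      then have "C \<inter> ball w \<rho> \<subseteq> A \<union> K"
        using near[OF x(2)] AK(5) by simp
      moreover have "connected_component (- (A \<union> K)) a b"
        using ab(3) J(3) AK(5) connected_component_of_subset by (metis Compl_anti_mono)
      ultimately show False
        using Janiszewski_near_split_curve[OF _ AK(1-4)] ab(1,2) ball_m C(3) by blast
    qed
  qed
qed

lemma frontier_point_locally_connected:
  fixes \<Omega> :: "complex set"
  assumes "open \<Omega>" "connected \<Omega>" "bounded (- \<Omega>)"
    and jordan_or_point: "\<forall>K\<in>components (frontier \<Omega>). jordan_curve K \<or> (\<exists>a. K = {a})"
    and finite_large: "\<forall>\<epsilon>>0. finite {K\<in>components (frontier \<Omega>). jordan_curve K \<and> diameter K > \<epsilon>}"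
    and w: "w \<in> frontier \<Omega>" and "\<eta> > 0"
  obtains \<epsilon> where "\<epsilon> > 0"
    "\<And>a b. a \<in> \<Omega> \<inter> ball w \<epsilon> \<Longrightarrow> b \<in> \<Omega> \<inter> ball w \<epsilon> \<Longrightarrow> connected_component (\<Omega> \<inter> ball w \<eta>) a b"
proof -
  have disj: "\<Omega> \<subseteq> - frontier \<Omega>"
    using \<open>open \<Omega>\<close> by (auto simp: frontier_def interior_open)
  then have "compact (frontier \<Omega>)"
    using \<open>bounded (- \<Omega>)\<close> by (meson bounded_subset compact_eq_bounded_closed frontier_closed subset_Compl_singleton compl_le_swap1)
  then obtain m where m: "m > 0" "m < \<eta>" "\<And>a b. a \<in> ball w m \<Longrightarrow> b \<in> ball w m \<Longrightarrow>
      connected_component (- frontier \<Omega>) a b \<Longrightarrow> connected_component (- (frontier \<Omega> \<union> sphere w \<eta>)) a b"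
    using sphere_Un_not_separating_near_centre[OF _ jordan_or_point finite_large w \<open>\<eta> > 0\<close>] by blast
  show thesis
  proof (rule that[OF \<open>m > 0\<close>])
    fix a b assume a: "a \<in> \<Omega> \<inter> ball w m" and b: "b \<in> \<Omega> \<inter> ball w m"
    have "connected_component (- frontier \<Omega>) a b"
      unfolding connected_component_def using a b disj \<open>connected \<Omega>\<close> by blast
    then have "connected_component (- (frontier \<Omega> \<union> frontier (ball w \<eta>))) a b"
      using m(3) a b \<open>\<eta> > 0\<close> by simp
    then show "connected_component (\<Omega> \<inter> ball w \<eta>) a b"
      by (rule connected_component_Int_of_avoiding_frontiers) (use a m(2) in auto)
  qed
qed

section \<open>Cluster values seen on small loops\<close>

lemma clu_approached_on_loops:
  assumes hom: "homeomorphism \<Omega> \<Omega>' f g" and z0: "z0 \<notin> \<Omega>" and w: "w \<in> clu f \<Omega> z0"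
    and "\<epsilon> > 0"
    and loc_conn: "\<And>a b. a \<in> \<Omega>' \<inter> ball w \<epsilon> \<Longrightarrow> b \<in> \<Omega>' \<inter> ball w \<epsilon> \<Longrightarrow>
                     connected_component (\<Omega>' \<inter> ball w \<eta>) a b"
  obtains \<delta> where "\<delta> > 0" "\<And>\<gamma>. loop_around z0 \<delta> \<gamma> \<Longrightarrow> \<exists>z\<in>path_image \<gamma> \<inter> \<Omega>. norm (f z - w) < \<eta>"
proof -
  have fO: "f ` \<Omega> = \<Omega>'" and gf: "\<And>x. x \<in> \<Omega> \<Longrightarrow> g (f x) = x"
    and fg: "\<And>y. y \<in> \<Omega>' \<Longrightarrow> f (g y) = y" and gO: "g ` \<Omega>' = \<Omega>" and cg: "continuous_on \<Omega>' g"
    using hom by (auto simp: homeomorphism_def)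
  have near: "\<exists>z\<in>ball z0 r \<inter> \<Omega>. f z \<in> \<Omega>' \<inter> ball w \<epsilon>" if "r > 0" for r
    using w that \<open>\<epsilon> > 0\<close> fO unfolding clu_approachable by (fastforce simp: dist_commute)
  obtain zq where zq: "zq \<in> \<Omega>" "f zq \<in> \<Omega>' \<inter> ball w \<epsilon>"
    using near[OF zero_less_one] by blast
  define \<delta> where "\<delta> = dist z0 zq"
  have "\<delta> > 0"
    using zq z0 by (auto simp: \<delta>_def)
  show thesis
  proof (rule that[OF \<open>\<delta> > 0\<close>])
    fix \<gamma> assume "loop_around z0 \<delta> \<gamma>"
    then obtain \<rho> where "\<rho> > 0" and encloses:
      "\<And>S. connected S \<Longrightarrow> S \<inter> path_image \<gamma> = {} \<Longrightarrow> S \<inter> ball z0 \<rho> \<noteq> {} \<Longrightarrow> S \<subseteq> ball z0 \<delta>"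
      by (rule loop_around_encloses) blast
    obtain z1 where z1: "z1 \<in> ball z0 \<rho> \<inter> \<Omega>" "f z1 \<in> \<Omega>' \<inter> ball w \<epsilon>"
      using near \<open>\<rho> > 0\<close> by blast
    show "\<exists>z\<in>path_image \<gamma> \<inter> \<Omega>. norm (f z - w) < \<eta>"
    proof (rule ccontr)
      assume avoid: "\<not> (\<exists>z\<in>path_image \<gamma> \<inter> \<Omega>. norm (f z - w) < \<eta>)"
      obtain T where T: "connected T" "T \<subseteq> \<Omega>' \<inter> ball w \<eta>" "f zq \<in> T" "f z1 \<in> T"
        using loc_conn[OF zq(2) z1(2)] unfolding connected_component_def by blast
      have "z1 \<in> g ` T" "zq \<in> g ` T"
        using T(3,4) gf zq(1) z1(1) by (metis IntD2 image_eqI)+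
      have "connected (g ` T)"
        using T(1,2) cg by (meson connected_continuous_image continuous_on_subset le_inf_iff)
      have "g t \<notin> path_image \<gamma>" if "t \<in> T" for t
      proof -
        have "t \<in> \<Omega>'" "dist w t < \<eta>"
          using that T(2) by auto
        then have "g t \<in> \<Omega>" "norm (f (g t) - w) < \<eta>"
          using fg gO by (auto simp: dist_norm norm_minus_commute)
        then show ?thesis
          using avoid by blast
      qed
      then have "g ` T \<subseteq> ball z0 \<delta>"
        using encloses[OF \<open>connected (g ` T)\<close>] \<open>z1 \<in> g ` T\<close> z1(1) by blast
      then show False
        using \<open>zq \<in> g ` T\<close> unfolding \<delta>_def by auto
    qed
  qed
qed

lemma loops_detect_diameter:
  assumes "compact K" "w0 \<in> K"
    and approach: "\<And>w \<eta>. w \<in> K \<Longrightarrow> \<eta> > 0 \<Longrightarrow>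
       \<exists>\<delta>>0. \<forall>\<gamma>. loop_around z0 \<delta> \<gamma> \<longrightarrow> (\<exists>z\<in>path_image \<gamma> \<inter> \<Omega>. norm (f z - w) < \<eta>)"
    and "\<eta> > 0"
  shows "\<exists>\<delta>>0. \<forall>\<gamma>. loop_around z0 \<delta> \<gamma> \<longrightarrow>
           (\<exists>z1\<in>path_image \<gamma> \<inter> \<Omega>. \<exists>z2\<in>path_image \<gamma> \<inter> \<Omega>. norm (f z1 - f z2) \<ge> diameter K - \<eta>)"
proof -
  obtain w1 w2 where w12: "w1 \<in> K" "w2 \<in> K" "dist w1 w2 = diameter K"
    using diameter_compact_attained[OF \<open>compact K\<close>] \<open>w0 \<in> K\<close> by blast
  obtain \<delta>1 where "\<delta>1 > 0"
    and \<delta>1: "\<forall>\<gamma>. loop_around z0 \<delta>1 \<gamma> \<longrightarrow> (\<exists>z\<in>path_image \<gamma> \<inter> \<Omega>. norm (f z - w1) < \<eta>/2)"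
    using approach[OF w12(1), of "\<eta>/2"] \<open>\<eta> > 0\<close> by auto
  obtain \<delta>2 where "\<delta>2 > 0"
    and \<delta>2: "\<forall>\<gamma>. loop_around z0 \<delta>2 \<gamma> \<longrightarrow> (\<exists>z\<in>path_image \<gamma> \<inter> \<Omega>. norm (f z - w2) < \<eta>/2)"
    using approach[OF w12(2), of "\<eta>/2"] \<open>\<eta> > 0\<close> by auto
  have "\<exists>z1\<in>path_image \<gamma> \<inter> \<Omega>. \<exists>z2\<in>path_image \<gamma> \<inter> \<Omega>. norm (f z1 - f z2) \<ge> diameter K - \<eta>"
    if \<gamma>: "loop_around z0 (min \<delta>1 \<delta>2) \<gamma>" for \<gamma>
  proof -
    have "loop_around z0 \<delta>1 \<gamma>" "loop_around z0 \<delta>2 \<gamma>"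
      using loop_around_mono[OF \<gamma>] by simp_all
    then obtain z1 z2 where z1: "z1 \<in> path_image \<gamma> \<inter> \<Omega>" "norm (f z1 - w1) < \<eta>/2"
      and z2: "z2 \<in> path_image \<gamma> \<inter> \<Omega>" "norm (f z2 - w2) < \<eta>/2"
      using \<delta>1 \<delta>2 by blast
    have "norm (w1 - w2) \<le> norm (f z1 - w1) + norm (f z1 - f z2) + norm (f z2 - w2)"
      by norm
    then have "norm (f z1 - f z2) \<ge> diameter K - \<eta>"
      using z1(2) z2(2) w12(3) by (simp add: dist_norm)
    then show ?thesis
      using z1(1) z2(1) by blast
  qed
  then show ?thesis
    using \<open>\<delta>1 > 0\<close> \<open>\<delta>2 > 0\<close> by (intro exI[of _ "min \<delta>1 \<delta>2"]) auto
qed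

lemma domain_with_infinity_imp_bounded_complement:
  "domain_with_infinity \<Omega> \<Longrightarrow> bounded (- \<Omega>)"
  unfolding domain_with_infinity_def bounded_iff by (meson ComplD not_le)

theorem lemma3p10:
  fixes \<Omega> \<Omega>' :: "complex set" and f g :: "complex \<Rightarrow> complex"
    and B :: "complex set" and z0 w0 :: complex
  assumes dom: "domain_with_infinity \<Omega>" and dom': "domain_with_infinity \<Omega>'"
    and hom: "homeomorphism \<Omega> \<Omega>' f g"
    and f_inf: "filterlim f at_infinity at_infinity"
    and g_inf: "filterlim g at_infinity at_infinity"
    and bd: "\<forall>C\<in>components (frontier \<Omega>). jordan_curve C \<or> (\<exists>a. C = {a})"
    and bd': "\<forall>C\<in>components (frontier \<Omega>'). jordan_curve C \<or> (\<exists>a. C = {a})"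
    and fin: "\<forall>\<epsilon>>0. finite {C\<in>components (frontier \<Omega>). jordan_curve C \<and> diameter C > \<epsilon>}"
    and fin': "\<forall>\<epsilon>>0. finite {C\<in>components (frontier \<Omega>'). jordan_curve C \<and> diameter C > \<epsilon>}"
    and B: "B \<in> components (- \<Omega>)"
    and z0: "z0 \<in> frontier B"
    and w0: "w0 \<in> clu f \<Omega> z0"
  shows "(\<forall>\<eta>>0. \<exists>\<delta>>0. \<forall>\<gamma>. path \<gamma> \<and> pathfinish \<gamma> = pathstart \<gamma>
            \<and> path_image \<gamma> \<subseteq> ball z0 \<delta> - {z0} \<and> winding_number \<gamma> z0 = 1
          \<longrightarrow> (\<exists>z\<in>path_image \<gamma> \<inter> \<Omega>. norm (f z - w0) < \<eta>))
       \<and> (\<forall>\<eta>>0. \<exists>\<delta>>0. \<forall>\<gamma>. path \<gamma> \<and> pathfinish \<gamma> = pathstart \<gamma>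
            \<and> path_image \<gamma> \<subseteq> ball z0 \<delta> - {z0} \<and> winding_number \<gamma> z0 = 1
          \<longrightarrow> (\<exists>z1\<in>path_image \<gamma> \<inter> \<Omega>. \<exists>z2\<in>path_image \<gamma> \<inter> \<Omega>.
                 norm (f z1 - f z2) \<ge> diameter (clu f \<Omega> z0) - \<eta>))"
proof -
  have "closed B"
    using B dom closed_components unfolding domain_with_infinity_def by (metis closed_Compl)
  then have "z0 \<notin> \<Omega>"
    using z0 in_components_subset[OF B] frontier_subset_closed by blast
  have \<Omega>': "open \<Omega>'" "connected \<Omega>'" "bounded (- \<Omega>')"
    using dom' domain_with_infinity_imp_bounded_complement by (auto simp: domain_with_infinity_def)
  have approach: "\<exists>\<delta>>0. \<forall>\<gamma>. loop_around z0 \<delta> \<gamma> \<longrightarrow> (\<exists>z\<in>path_image \<gamma> \<inter> \<Omega>. norm (f z - w) < \<eta>)"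
    if w: "w \<in> clu f \<Omega> z0" and "\<eta> > 0" for w \<eta>
  proof -
    have "w \<in> frontier \<Omega>'"
      using clu_subset_frontier[OF hom \<Omega>'(1) \<open>z0 \<notin> \<Omega>\<close>] w by blast
    then obtain \<epsilon> where "\<epsilon> > 0" "\<And>a b. a \<in> \<Omega>' \<inter> ball w \<epsilon> \<Longrightarrow> b \<in> \<Omega>' \<inter> ball w \<epsilon> \<Longrightarrow>
        connected_component (\<Omega>' \<inter> ball w \<eta>) a b"
      using frontier_point_locally_connected[OF \<Omega>' bd' fin' _ \<open>\<eta> > 0\<close>] by blast
    then show ?thesis
      using clu_approached_on_loops[OF hom \<open>z0 \<notin> \<Omega>\<close> w] by metis
  qed
  have "compact (clu f \<Omega> z0)"
    by (rule compact_clu[OF zero_less_one homeomorphism_bounded_image[OF hom g_inf]]) auto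
  then show ?thesis
    using approach[OF w0] loops_detect_diameter[OF _ w0 approach] unfolding loop_around_def by blast
qed

end
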